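(* Let $n$ be a positive integer and let $A(n)=(a_{ij})_{i,j\in\mathbb{N}}$ be the greedy matrix described in the context. For each $j\geq 1$ let $f(j)$ be the smallest $i$ such that $a_{ij}=1$. Then $f$ is monotonically increasing, i.e. $f(j)\le f(k)$ whenever $1\le j<k$.
   Context: $\mathbb{N}=\{1,2,3,\dots\}$. Fix a positive integer $n$. The infinite $\{0,1\}$-matrix $A(n)=(a_{ij})_{i,j\in\mathbb{N}}$ is defined recursively. Its entries are determined row by row (row $1$ first), and within each row from left to right, so that $a_{kl}$ is determined after all $a_{ij}$ with $i<k$ and all $a_{kj}$ with $j<l$. One sets $a_{kl}=1$ if and only if all of the following hold: (1) $\sum_{j<l}a_{kj}<n+1$; (2) $\sum_{i<k}a_{il}<n+1$; (3) there is no pair $(i,j)$ with $1\le i<k$, $1\le j<l$ and $a_{ij}=a_{il}=a_{kj}=1$. Otherwise $a_{kl}=0$. *)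

theory Defs
  imports Main
begin

text \<open>The greedy matrix A(n), indexed 1-based: greedy n k l is the entry a_{kl}
(True = 1, False = 0).  Entries with k = 0 or l = 0 are outside the matrix and set to False.\<close>

function greedy :: "nat \<Rightarrow> nat \<Rightarrow> nat \<Rightarrow> bool" where
  "greedy n k l =
     (1 \<le> k \<and> 1 \<le> l \<and>
      (\<Sum>j\<in>{1..<l}. (if greedy n k j then 1 else 0 :: nat)) < n + 1 \<and>
      (\<Sum>i\<in>{1..<k}. (if greedy n i l then 1 else 0 :: nat)) < n + 1 \<and>
      \<not> (\<exists>i\<in>{1..<k}. \<exists>j\<in>{1..<l}. greedy n i j \<and> greedy n i l \<and> greedy n k j))"
  by auto
termination
  by (relation "measure (\<lambda>(n, k, l). k + l)") auto

end

theory Submission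
  imports Defs
begin

text \<open>Every column of A(n) contains at most n + 1 ones, so any row below all ones of the
columns 1, \<dots>, k - 1 receives a one in column k: the column minimum f(k) exists.
If f(j) > f(k) = r for some j < k, then column j is empty down to row r, so a_{rj} = 0
can only be caused by n + 1 ones in row r left of column j; these also lie left of
column k, contradicting a_{rk} = 1.\<close>

declare greedy.simps[simp del]

lemma greedy_iff:
  "greedy n k l \<longleftrightarrow>
     1 \<le> k \<and> 1 \<le> l \<and>
     card {j\<in>{1..<l}. greedy n k j} \<le> n \<and>
     card {i\<in>{1..<k}. greedy n i l} \<le> n \<and>
     \<not> (\<exists>i\<in>{1..<k}. \<exists>j\<in>{1..<l}. greedy n i j \<and> greedy n i l \<and> greedy n k j)"
proof -
  have count: "(\<Sum>x\<in>{a..<b}. (if P x then 1 else 0 :: nat)) = card {x\<in>{a..<b}. P x}"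
    for a b :: nat and P
    by (simp add: sum.If_cases Int_def)
  show ?thesis
    unfolding greedy.simps[of n k l] count by linarith
qed

lemma greedy_pos: "greedy n k l \<Longrightarrow> 1 \<le> k \<and> 1 \<le> l"
  by (subst (asm) greedy_iff) simp

lemma finite_greedy_column: "finite {i. greedy n i l}"
proof (rule ccontr)
  assume "infinite {i. greedy n i l}"
  then obtain S where S: "S \<subseteq> {i. greedy n i l}" "finite S" "card S = n + 2"
    using infinite_arbitrarily_large by blast
  define m where "m = Max S"
  have "S \<noteq> {}" using S by auto
  then have "m \<in> S" using S m_def by simp
  then have "greedy n m l" using S by auto
  have "S - {m} \<subseteq> {i\<in>{1..<m}. greedy n i l}"
  proof
    fix x assume x: "x \<in> S - {m}"
    then have "x < m" using S m_def by (simp add: order.not_eq_order_implies_strict)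
    with x S greedy_pos show "x \<in> {i\<in>{1..<m}. greedy n i l}" by auto
  qed
  then have "n + 1 \<le> card {i\<in>{1..<m}. greedy n i l}"
    using card_mono[of "{i\<in>{1..<m}. greedy n i l}" "S - {m}"] \<open>m \<in> S\<close> S by simp
  moreover have "card {i\<in>{1..<m}. greedy n i l} \<le> n"
    using \<open>greedy n m l\<close> greedy_iff[of n m l] by blast
  ultimately show False by simp
qed

lemma greedy_column_nonempty:
  assumes "1 \<le> l"
  shows "\<exists>i. greedy n i l"
proof (rule ccontr)
  assume empty: "\<nexists>i. greedy n i l"
  have "finite (insert 0 (\<Union>j\<in>{1..<l}. {i. greedy n i j}))"
    using finite_greedy_column by blast
  then obtain m where m: "m \<notin> insert 0 (\<Union>j\<in>{1..<l}. {i. greedy n i j})"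
    using ex_new_if_finite[OF infinite_UNIV_nat] by blast
  have row_empty: "{j\<in>{1..<l}. greedy n m j} = {}"
    using m by blast
  have "greedy n m l"
  proof (subst greedy_iff, intro conjI)
    show "1 \<le> m" using m by simp
    show "card {j\<in>{1..<l}. greedy n m j} \<le> n" unfolding row_empty by simp
    show "card {i\<in>{1..<m}. greedy n i l} \<le> n" using empty by simp
    show "\<not> (\<exists>i\<in>{1..<m}. \<exists>j\<in>{1..<l}. greedy n i j \<and> greedy n i l \<and> greedy n m j)"
      using row_empty by blast
  qed (rule assms)
  with empty show False by blast
qed

lemma greedy_earlier_column_has_one_above:
  assumes "greedy n r k" and "1 \<le> j" and "j < k"
  shows "\<exists>i\<le>r. greedy n i j"
proof (rule ccontr)
  assume above_empty: "\<not> (\<exists>i\<le>r. greedy n i j)"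
  have "1 \<le> r" using assms(1) greedy_pos by blast
  have column_empty: "{i\<in>{1..<r}. greedy n i j} = {}"
    using above_empty by auto
  have "card {i\<in>{1..<r}. greedy n i j} \<le> n"
    unfolding column_empty by simp
  moreover have "\<not> (\<exists>i\<in>{1..<r}. \<exists>l\<in>{1..<j}. greedy n i l \<and> greedy n i j \<and> greedy n r l)"
    using column_empty by blast
  moreover have "\<not> greedy n r j"
    using above_empty by blast
  ultimately have "\<not> card {l\<in>{1..<j}. greedy n r l} \<le> n"
    using \<open>1 \<le> r\<close> assms(2) greedy_iff[of n r j] by blast
  then have "n < card {l\<in>{1..<j}. greedy n r l}"
    by simp
  also have "\<dots> \<le> card {l\<in>{1..<k}. greedy n r l}"
    using assms(3) by (intro card_mono) auto
  finally have "n < card {l\<in>{1..<k}. greedy n r l}" .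
  moreover have "card {l\<in>{1..<k}. greedy n r l} \<le> n"
    using assms(1) greedy_iff[of n r k] by blast
  ultimately show False by simp
qed

theorem lemma3p3:
  fixes n j k :: nat
  assumes "n \<ge> 1" and "1 \<le> j" and "j < k"
  shows "(LEAST i. greedy n i j) \<le> (LEAST i. greedy n i k)"
proof -
  define r where "r = (LEAST i. greedy n i k)"
  have "\<exists>i. greedy n i k"
    using greedy_column_nonempty assms(2,3) by simp
  then have "greedy n r k"
    unfolding r_def by (rule LeastI_ex)
  then obtain i where "i \<le> r" "greedy n i j"
    using greedy_earlier_column_has_one_above assms(2,3) by blast
  then have "(LEAST i. greedy n i j) \<le> r"
    using Least_le[of "\<lambda>i. greedy n i j"] le_trans by blast
  then show ?thesis
    unfolding r_def by simp
qed

end
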